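(* Let $C'$ be an odd-like binary Euclidean LCD $[n,k,d]$ code. Then there exist a binary Euclidean LCD $[n-1,k-1,d']$ code $C$ with $d'\ge d$, a generator matrix $G$ of $C$, and a vector $\mathbf{x}\in C^{\perp_E}$ of even Hamming weight, such that $C'$ is equivalent to the binary code with generator matrix $\begin{pmatrix}1&\mathbf{x}\\ \mathbf{0}&G\end{pmatrix}$.
   Context: A binary $[n,k,d]$ code is a $k$-dimensional subspace of $\mathbb{F}_2^n$ with minimum nonzero Hamming weight $d$. $C^{\perp_E}$ is the dual with respect to $\langle x,y\rangle_E=\sum x_iy_i$; $C$ is LCD if $C\cap C^{\perp_E}=\{0\}$. A vector $x\in\mathbb{F}_2^n$ is even-like if $\sum x_i=0$ and odd-like otherwise; a binary code is even-like if all its codewords are even-like, and odd-like otherwise. Two codes are equivalent if one is obtained from the other by a monomial transformation (for binary codes, a coordinate permutation). $\mathbf{0}$ denotes a zero column. *)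

theory Defs
  imports "HOL-Library.Z2" "HOL-Combinatorics.Permutations"
begin

text \<open>Binary vectors of length n are lists over the field bit = GF(2) of length n.\<close>

definition vzero :: "nat \<Rightarrow> bit list" where
  "vzero n = replicate n 0"

definition vadd :: "bit list \<Rightarrow> bit list \<Rightarrow> bit list" where
  "vadd x y = map2 (+) x y"

definition hwt :: "bit list \<Rightarrow> nat" where
  "hwt x = length (filter (\<lambda>a. a \<noteq> 0) x)"

definition eip :: "bit list \<Rightarrow> bit list \<Rightarrow> bit" where
  "eip x y = sum_list (map2 (*) x y)"

text \<open>Linear binary code of length n: an F2-subspace of F2^n (scalar multiplication
  over F2 is trivial, so closure under 0 and addition suffices).\<close>
definition lin_code :: "nat \<Rightarrow> bit list set \<Rightarrow> bool" where
  "lin_code n C \<longleftrightarrow> C \<subseteq> {v. length v = n} \<and> vzero n \<in> C \<and>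
     (\<forall>x\<in>C. \<forall>y\<in>C. vadd x y \<in> C)"

definition min_dist :: "nat \<Rightarrow> bit list set \<Rightarrow> nat" where
  "min_dist n C = Min (hwt ` (C - {vzero n}))"

text \<open>[n,k,d] binary linear code; a k-dimensional F2-subspace has exactly 2^k elements.
  For the zero code (k = 0) the minimum distance is undefined (conventionally infinite),
  so no condition on d is imposed then.\<close>
definition bin_code :: "nat \<Rightarrow> nat \<Rightarrow> nat \<Rightarrow> bit list set \<Rightarrow> bool" where
  "bin_code n k d C \<longleftrightarrow> lin_code n C \<and> card C = 2 ^ k \<and> (k > 0 \<longrightarrow> min_dist n C = d)"

definition euclid_dual :: "nat \<Rightarrow> bit list set \<Rightarrow> bit list set" where
  "euclid_dual n C = {y. length y = n \<and> (\<forall>x\<in>C. eip x y = 0)}"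

definition is_LCD :: "nat \<Rightarrow> bit list set \<Rightarrow> bool" where
  "is_LCD n C \<longleftrightarrow> C \<inter> euclid_dual n C = {vzero n}"

definition even_like_vec :: "bit list \<Rightarrow> bool" where
  "even_like_vec x \<longleftrightarrow> sum_list x = 0"

definition odd_like_code :: "bit list set \<Rightarrow> bool" where
  "odd_like_code C \<longleftrightarrow> (\<exists>c\<in>C. \<not> even_like_vec c)"

text \<open>Matrices are lists of rows. Linear combination of the rows with coefficients a.\<close>
definition lincomb :: "nat \<Rightarrow> bit list list \<Rightarrow> (nat \<Rightarrow> bit) \<Rightarrow> bit list" where
  "lincomb n M a = map (\<lambda>j. \<Sum>i<length M. a i * (M ! i ! j)) [0..<n]"

definition gen_code :: "nat \<Rightarrow> bit list list \<Rightarrow> bit list set" where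
  "gen_code n M = range (lincomb n M)"

definition is_gen_matrix :: "nat \<Rightarrow> bit list list \<Rightarrow> bit list set \<Rightarrow> bool" where
  "is_gen_matrix n M C \<longleftrightarrow> (\<forall>r\<in>set M. length r = n) \<and>
     (\<forall>a. lincomb n M a = vzero n \<longrightarrow> (\<forall>i<length M. a i = 0)) \<and>
     gen_code n M = C"

text \<open>Binary codes are equivalent iff they differ by a coordinate permutation.\<close>
definition perm_vec :: "nat \<Rightarrow> (nat \<Rightarrow> nat) \<Rightarrow> bit list \<Rightarrow> bit list" where
  "perm_vec n \<sigma> c = map (\<lambda>j. c ! \<sigma> j) [0..<n]"

definition code_equiv :: "nat \<Rightarrow> bit list set \<Rightarrow> bit list set \<Rightarrow> bool" where
  "code_equiv n C D \<longleftrightarrow> (\<exists>\<sigma>. \<sigma> permutes {..<n} \<and> C = perm_vec n \<sigma> ` D)"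

end

(*
  Over F_2 an LCD code C' satisfies F_2^n = C' + C'^perp (direct), so every coordinate functional
  c |-> c_i is represented on C' by a codeword u_i, i.e. <c, u_i> = c_i for c in C'. Expanding
  codewords as c = sum c_i u_i shows that some (u_i)_i = 1 unless C' is even-like. For such a
  pivot v = u_i, C' is the direct sum of its subcode D vanishing at i and the line spanned by v,
  and v is orthogonal to D. Puncturing D at i gives the LCD code C, puncturing v gives the border
  x, which lies in the dual of C and has even weight because wt(v) = <v, v> = v_i = 1 mod 2.
*)
theory Submission
  imports Defs
begin

declare add_bit_eq_xor [simp del] mult_bit_eq_and [simp del]

lemma bit_add_self [simp]: "(b::bit) + b = 0"
  by (cases b) auto

lemma bit_add_eq_0_iff: "(b::bit) + c = 0 \<longleftrightarrow> b = c"
  by (cases b; cases c) auto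

lemma UNIV_bit: "(UNIV :: bit set) = {0, 1}"
  using bit.exhaust by auto

lemma card_UNIV_bit: "card (UNIV :: bit set) = 2"
  by (simp add: UNIV_bit)

lemma finite_UNIV_bit [simp]: "finite (UNIV :: bit set)"
  by (simp add: UNIV_bit)

lemma finite_vectors: "finite {v :: bit list. length v = n}"
  using finite_lists_length_eq[of "UNIV :: bit set" n] by simp

lemma card_vectors: "card {v :: bit list. length v = n} = 2 ^ n"
  using card_lists_length_eq[of "UNIV :: bit set" n] by (simp add: card_UNIV_bit)

lemma length_vzero [simp]: "length (vzero n) = n"
  by (simp add: vzero_def)

lemma nth_vzero [simp]: "j < n \<Longrightarrow> vzero n ! j = 0"
  by (simp add: vzero_def)

lemma length_vadd [simp]: "length (vadd x y) = min (length x) (length y)"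
  by (simp add: vadd_def)

lemma nth_vadd [simp]: "j < length x \<Longrightarrow> j < length y \<Longrightarrow> vadd x y ! j = x ! j + y ! j"
  by (simp add: vadd_def)

lemma vadd_vzero_right: "length x = n \<Longrightarrow> vadd x (vzero n) = x"
  by (rule nth_equalityI) auto

lemma vadd_self: "vadd x x = vzero (length x)"
  by (rule nth_equalityI) auto

lemma vadd_cancel_left: "length x = length y \<Longrightarrow> vadd x (vadd x y) = y"
  by (rule nth_equalityI) (auto simp flip: add.assoc)

lemma vadd_eq_vzero_iff: "length x = n \<Longrightarrow> length y = n \<Longrightarrow> vadd x y = vzero n \<longleftrightarrow> x = y"
  by (metis vadd_cancel_left vadd_self vadd_vzero_right)

lemma eip_conv_sum: "length x = n \<Longrightarrow> length y = n \<Longrightarrow> eip x y = (\<Sum>j<n. x ! j * y ! j)"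
  unfolding eip_def by (simp add: sum_list_sum_nth atLeast0LessThan)

lemma eip_commute: "length x = length y \<Longrightarrow> eip x y = eip y x"
  by (simp add: eip_conv_sum mult.commute)

lemma eip_vadd_right:
  "length x = n \<Longrightarrow> length y = n \<Longrightarrow> length z = n \<Longrightarrow> eip x (vadd y z) = eip x y + eip x z"
  by (simp add: eip_conv_sum distrib_left sum.distrib)

lemma eip_vzero_right: "length x = n \<Longrightarrow> eip x (vzero n) = 0"
  by (simp add: eip_conv_sum)

lemma eip_self: "eip x x = sum_list x"
  unfolding eip_def by (induction x) auto

lemma even_hwt_iff: "even (hwt x) \<longleftrightarrow> sum_list x = 0"
proof -
  have "sum_list x = of_nat (hwt x)"
    unfolding hwt_def by (induction x) auto
  moreover have "(of_nat m :: bit) = 0 \<longleftrightarrow> even m" for m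
    by (induction m) (auto simp: add.commute)
  ultimately show ?thesis
    by simp
qed

lemma lin_code_length: "lin_code n C \<Longrightarrow> c \<in> C \<Longrightarrow> length c = n"
  by (auto simp: lin_code_def)

lemma lin_code_vzero: "lin_code n C \<Longrightarrow> vzero n \<in> C"
  by (simp add: lin_code_def)

lemma lin_code_vadd: "lin_code n C \<Longrightarrow> x \<in> C \<Longrightarrow> y \<in> C \<Longrightarrow> vadd x y \<in> C"
  by (simp add: lin_code_def)

lemma lin_code_finite: "lin_code n C \<Longrightarrow> finite C"
  unfolding lin_code_def using finite_vectors[of n] finite_subset by blast

lemma LCD_orthogonal_imp_vzero:
  "is_LCD n C \<Longrightarrow> y \<in> C \<Longrightarrow> length y = n \<Longrightarrow> \<forall>c\<in>C. eip c y = 0 \<Longrightarrow> y = vzero n"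
  unfolding is_LCD_def euclid_dual_def by blast

lemma LCD_eqI:
  assumes "lin_code n C" "is_LCD n C" "x \<in> C" "y \<in> C" and "\<forall>c\<in>C. eip c x = eip c y"
  shows "x = y"
proof -
  have "vadd x y = vzero n"
    using assms by (intro LCD_orthogonal_imp_vzero)
      (auto simp: lin_code_vadd lin_code_length eip_vadd_right)
  with assms show ?thesis
    by (simp add: vadd_eq_vzero_iff lin_code_length)
qed

lemma length_lincomb [simp]: "length (lincomb n M a) = n"
  by (simp add: lincomb_def)

lemma nth_lincomb [simp]: "j < n \<Longrightarrow> lincomb n M a ! j = (\<Sum>i<length M. a i * (M ! i ! j))"
  by (simp add: lincomb_def)

lemma lincomb_cong: "(\<And>i. i < length M \<Longrightarrow> a i = b i) \<Longrightarrow> lincomb n M a = lincomb n M b"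
  unfolding lincomb_def by (auto intro!: sum.cong)

lemma lincomb_Nil [simp]: "lincomb n [] a = vzero n"
  by (rule nth_equalityI) auto

lemma lincomb_Cons:
  assumes "length r = n"
  shows "lincomb n (r # M) a =
    (if a 0 = 0 then lincomb n M (\<lambda>i. a (Suc i)) else vadd r (lincomb n M (\<lambda>i. a (Suc i))))"
proof (rule nth_equalityI)
  fix j assume "j < length (lincomb n (r # M) a)"
  then have j: "j < n" by simp
  then have "lincomb n (r # M) a ! j = a 0 * r ! j + (\<Sum>i<length M. a (Suc i) * (M ! i ! j))"
    by (simp only: nth_lincomb length_Cons sum.lessThan_Suc_shift) simp
  with j assms(1) show "lincomb n (r # M) a ! j =
      (if a 0 = 0 then lincomb n M (\<lambda>i. a (Suc i)) else vadd r (lincomb n M (\<lambda>i. a (Suc i)))) ! j"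
    by (cases "a 0") auto
qed (use assms in simp)

lemma lincomb_add: "vadd (lincomb n M a) (lincomb n M b) = lincomb n M (\<lambda>i. a i + b i)"
  by (rule nth_equalityI) (auto simp: distrib_right sum.distrib)

lemma lincomb_unit:
  assumes "i < length M" "length (M ! i) = n"
  shows "lincomb n M (\<lambda>l. if l = i then 1 else 0) = M ! i"
  using assms by (intro nth_equalityI)
    (auto simp: if_distrib[of "\<lambda>x. x * _"] sum.If_cases Int_absorb1)

lemma lincomb_mem: "lin_code n C \<Longrightarrow> set M \<subseteq> C \<Longrightarrow> lincomb n M a \<in> C"
proof (induction M arbitrary: a)
  case Nil
  then show ?case by (simp add: lin_code_vzero)
next
  case (Cons r M)
  then show ?case
    by (auto simp: lincomb_Cons lin_code_length lin_code_vadd)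
qed

lemma eip_lincomb_right:
  assumes "length c = n" and "\<forall>r\<in>set M. length r = n"
  shows "eip c (lincomb n M a) = (\<Sum>i<length M. a i * eip c (M ! i))"
proof -
  have "eip c (lincomb n M a) = (\<Sum>j<n. c ! j * (\<Sum>i<length M. a i * (M ! i ! j)))"
    using assms(1) by (simp add: eip_conv_sum)
  also have "\<dots> = (\<Sum>i<length M. a i * (\<Sum>j<n. c ! j * (M ! i ! j)))"
    by (simp add: sum_distrib_left sum.swap[of _ "{..<n}"] mult.left_commute)
  finally show ?thesis
    using assms by (simp add: eip_conv_sum)
qed

lemma lin_code_gen_code: "lin_code n (gen_code n M)"
proof -
  have "vzero n = lincomb n M (\<lambda>_. 0)"
    by (rule nth_equalityI) auto
  then show ?thesis
    unfolding lin_code_def gen_code_def by (auto simp: lincomb_add)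
qed

lemma gen_code_Cons:
  assumes "length r = n"
  shows "gen_code n (r # M) = gen_code n M \<union> vadd r ` gen_code n M"
proof (rule set_eqI, rule iffI)
  fix y assume "y \<in> gen_code n (r # M)"
  then show "y \<in> gen_code n M \<union> vadd r ` gen_code n M"
    using assms by (auto simp: lincomb_Cons gen_code_def split: if_splits)
next
  fix y assume "y \<in> gen_code n M \<union> vadd r ` gen_code n M"
  then consider b where "y = lincomb n M b" | b where "y = vadd r (lincomb n M b)"
    by (auto simp: gen_code_def)
  then show "y \<in> gen_code n (r # M)"
  proof cases
    case (1 b)
    then have "y = lincomb n (r # M) (case_nat 0 b)"
      using assms by (simp add: lincomb_Cons)
    then show ?thesis by (simp add: gen_code_def)
  next
    case (2 b)
    then have "y = lincomb n (r # M) (case_nat 1 b)"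
      using assms by (simp add: lincomb_Cons)
    then show ?thesis by (simp add: gen_code_def)
  qed
qed

lemma gen_code_rows_mem:
  assumes "\<forall>r\<in>set M. length r = n" and "r \<in> set M"
  shows "r \<in> gen_code n M"
proof -
  obtain i where "i < length M" "r = M ! i"
    using assms(2) by (auto simp: in_set_conv_nth)
  with assms(1) have "r = lincomb n M (\<lambda>l. if l = i then 1 else 0)"
    by (simp add: lincomb_unit)
  then show ?thesis
    by (simp add: gen_code_def)
qed

lemma gen_matrix_of_gen_code_exists:
  "\<forall>r\<in>set L. length r = n \<Longrightarrow> \<exists>G. is_gen_matrix n G (gen_code n L)"
proof (induction L)
  case Nil
  show ?case
    by (rule exI[of _ "[]"]) (simp add: is_gen_matrix_def)
next
  case (Cons r L)
  then obtain G where G: "is_gen_matrix n G (gen_code n L)" and r: "length r = n"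
    by auto
  define S where "S = gen_code n L"
  have Cons_eq: "gen_code n (r # L) = S \<union> vadd r ` S"
    using r by (simp add: gen_code_Cons S_def)
  show ?case
  proof (cases "r \<in> S")
    case True
    then have "vadd r ` S \<subseteq> S"
      using lin_code_vadd[OF lin_code_gen_code] by (auto simp: S_def)
    with G show ?thesis
      using Cons_eq by (auto simp: S_def Un_absorb2)
  next
    case False
    have "lincomb n (r # G) a = vzero n \<Longrightarrow> j < length (r # G) \<Longrightarrow> a j = 0" for a j
    proof (cases "a 0")
      case zero
      moreover assume "lincomb n (r # G) a = vzero n" "j < length (r # G)"
      ultimately show ?thesis
        using G r by (cases j) (auto simp: lincomb_Cons is_gen_matrix_def)
    next
      case one
      moreover assume "lincomb n (r # G) a = vzero n"
      ultimately have "r = lincomb n G (\<lambda>j. a (Suc j))"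
        using r by (simp add: lincomb_Cons vadd_eq_vzero_iff)
      with G False show ?thesis
        by (auto simp: is_gen_matrix_def gen_code_def S_def)
    qed
    with G r show ?thesis
      using Cons_eq gen_code_Cons[OF r, of G]
      by (intro exI[of _ "r # G"]) (auto simp: is_gen_matrix_def S_def)
  qed
qed

lemma lin_code_gen_matrix_exists: "lin_code n C \<Longrightarrow> \<exists>G. is_gen_matrix n G C"
proof -
  assume C: "lin_code n C"
  obtain L where L: "set L = C"
    using lin_code_finite[OF C] finite_list by blast
  then have rows: "\<forall>r\<in>set L. length r = n"
    using C lin_code_length by blast
  have "gen_code n L = C"
    using lincomb_mem[OF C] gen_code_rows_mem[OF rows] L by (auto simp: gen_code_def)
  with gen_matrix_of_gen_code_exists[OF rows] show ?thesis
    by auto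
qed

lemma card_gen_matrix: "is_gen_matrix n G C \<Longrightarrow> card C = 2 ^ length G"
proof -
  assume G: "is_gen_matrix n G C"
  define K where "K = length G"
  define f where "f l = lincomb n G (\<lambda>j. l ! j)" for l :: "bit list"
  have "f ` {l. length l = K} = C"
  proof
    show "f ` {l. length l = K} \<subseteq> C"
      using G by (auto simp: f_def is_gen_matrix_def gen_code_def)
    show "C \<subseteq> f ` {l. length l = K}"
    proof
      fix c assume "c \<in> C"
      then obtain a where "c = lincomb n G a"
        using G by (auto simp: is_gen_matrix_def gen_code_def)
      then have "c = f (map a [0..<K])"
        unfolding f_def by (auto simp: K_def intro: lincomb_cong)
      then show "c \<in> f ` {l. length l = K}"
        by simp
    qed
  qed
  moreover have "inj_on f {l. length l = K}"
  proof (rule inj_onI)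
    fix l l' assume l: "l \<in> {l. length l = K}" "l' \<in> {l. length l = K}" and "f l = f l'"
    then have "lincomb n G (\<lambda>j. l ! j + l' ! j) = vzero n"
      by (simp add: f_def vadd_self flip: lincomb_add)
    with G have "\<forall>j<K. l ! j + l' ! j = 0"
      by (auto simp: is_gen_matrix_def K_def)
    with l show "l = l'"
      by (intro nth_equalityI) (auto simp: bit_add_eq_0_iff)
  qed
  ultimately show ?thesis
    using card_image card_vectors K_def by metis
qed

lemma eip_eq_on_gen_code:
  assumes rows: "\<forall>r\<in>set M. length r = n" and "length u = n" "length w = n"
    and eq: "\<forall>r\<in>set M. eip r u = eip r w" and "c \<in> gen_code n M"
  shows "eip c u = eip c w"
proof -
  obtain a where c: "c = lincomb n M a"
    using assms(5) by (auto simp: gen_code_def)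
  have "eip r u = eip u r" "eip r w = eip w r" if "r \<in> set M" for r
    using that rows assms(2,3) by (simp_all add: eip_commute)
  with eq have "eip u (M ! j) = eip w (M ! j)" if "j < length M" for j
    using that by (metis nth_mem)
  then show ?thesis
    using assms(2,3) rows by (simp add: c eip_commute eip_lincomb_right)
qed

text \<open>By the LCD property, \<open>u \<mapsto> (\<langle>g, u\<rangle>)\<^sub>g\<close> (\<open>g\<close> running over a basis of \<open>C\<close>) is
  injective on \<open>C\<close>, hence onto \<open>\<bbbF>\<^sub>2\<^sup>k\<close> by counting.\<close>
lemma LCD_projection_exists:
  assumes C: "lin_code n C" and LCD: "is_LCD n C" and y: "length y = n"
  shows "\<exists>u\<in>C. \<forall>c\<in>C. eip c u = eip c y"
proof -
  obtain G where G: "is_gen_matrix n G C"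
    using lin_code_gen_matrix_exists[OF C] by blast
  have rows: "\<forall>r\<in>set G. length r = n" and C_eq: "gen_code n G = C"
    using G by (auto simp: is_gen_matrix_def)
  define \<phi> where "\<phi> u = map (\<lambda>r. eip r u) G" for u
  have \<phi>_eq: "c \<in> C \<Longrightarrow> \<phi> u = \<phi> w \<Longrightarrow> length u = n \<Longrightarrow> length w = n \<Longrightarrow> eip c u = eip c w" for c u w
    using eip_eq_on_gen_code[OF rows, of u w c] C_eq by (simp add: \<phi>_def)
  have "inj_on \<phi> C"
    using LCD_eqI[OF C LCD] \<phi>_eq lin_code_length[OF C] by (meson inj_onI)
  then have "card (\<phi> ` C) = card {l :: bit list. length l = length G}"
    using card_image card_gen_matrix[OF G] card_vectors by metis
  then have "\<phi> ` C = {l. length l = length G}"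
    by (intro card_subset_eq finite_vectors) (auto simp: \<phi>_def)
  then obtain u where "u \<in> C" "\<phi> u = \<phi> y"
    by (metis (mono_tags, lifting) \<phi>_def imageE length_map mem_Collect_eq)
  then show ?thesis
    using \<phi>_eq y lin_code_length[OF C] by blast
qed

lemma LCD_coordinate_projection_exists:
  assumes "lin_code n C" "is_LCD n C" and i: "i < n"
  shows "\<exists>u\<in>C. \<forall>c\<in>C. eip c u = c ! i"
proof -
  define e :: "bit list" where "e = map (\<lambda>j. if j = i then 1 else 0) [0..<n]"
  have "eip c e = c ! i" if "c \<in> C" for c
    using that i lin_code_length[OF assms(1)]
    by (simp add: e_def eip_conv_sum if_distrib[of "\<lambda>x. _ * x"] sum.If_cases Int_absorb1)
  then show ?thesis
    using LCD_projection_exists[OF assms(1,2), of e] by (simp add: e_def)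
qed

text \<open>With \<open>u\<^sub>j\<close> representing the \<open>j\<close>-th coordinate, \<open>c = \<Sum>\<^sub>j c\<^sub>j u\<^sub>j\<close> by the LCD
  property, and \<open>\<Sum> u\<^sub>j = \<langle>u\<^sub>j, u\<^sub>j\<rangle> = (u\<^sub>j)\<^sub>j\<close>; hence \<open>\<Sum> c = \<Sum>\<^sub>j c\<^sub>j (u\<^sub>j)\<^sub>j\<close>.\<close>
lemma odd_like_LCD_pivot_exists:
  assumes C: "lin_code n C" and LCD: "is_LCD n C" and odd: "odd_like_code C"
  shows "\<exists>i<n. \<exists>v\<in>C. v ! i = 1 \<and> (\<forall>c\<in>C. eip c v = c ! i)"
proof -
  obtain u where u: "\<And>j. j < n \<Longrightarrow> u j \<in> C \<and> (\<forall>c\<in>C. eip c (u j) = c ! j)"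
    using LCD_coordinate_projection_exists[OF C LCD] by metis
  have len: "c \<in> C \<Longrightarrow> length c = n" for c
    using lin_code_length[OF C] .
  define U where "U = map u [0..<n]"
  have U: "\<forall>r\<in>set U. length r = n" "set U \<subseteq> C"
    using u len by (auto simp: U_def)
  have expansion: "c = lincomb n U (\<lambda>j. c ! j)" if c: "c \<in> C" for c
  proof (rule LCD_eqI[OF C LCD c lincomb_mem[OF C U(2)]], intro ballI)
    fix c' assume c': "c' \<in> C"
    have "eip c' (lincomb n U (\<lambda>j. c ! j)) = (\<Sum>j<n. c ! j * c' ! j)"
      using u c' len[OF c'] U(1) by (simp add: eip_lincomb_right U_def)
    also have "\<dots> = eip c' c"
      using len c c' by (simp add: eip_conv_sum mult.commute)
    finally show "eip c' c = eip c' (lincomb n U (\<lambda>j. c ! j))" ..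
  qed
  have "sum_list c = (\<Sum>j<n. c ! j * u j ! j)" if "c \<in> C" for c
  proof -
    have "sum_list (lincomb n U a) = (\<Sum>l<n. \<Sum>j<n. a j * u j ! l)" for a
      unfolding sum_list_sum_nth atLeast0LessThan by (auto simp: U_def intro!: sum.cong)
    then have "sum_list c = (\<Sum>l<n. \<Sum>j<n. c ! j * u j ! l)"
      by (metis expansion[OF that])
    also have "\<dots> = (\<Sum>j<n. c ! j * sum_list (u j))"
      using u len by (subst sum.swap) (simp add: sum_list_sum_nth atLeast0LessThan sum_distrib_left)
    also have "\<dots> = (\<Sum>j<n. c ! j * u j ! j)"
      using u by (simp flip: eip_self)
    finally show ?thesis .
  qed
  moreover obtain c where "c \<in> C" "sum_list c \<noteq> 0"
    using odd by (auto simp: odd_like_code_def even_like_vec_def)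
  ultimately obtain i where "i < n" "u i ! i \<noteq> 0"
    by (metis (no_types, lifting) lessThan_iff mult_zero_right sum.neutral)
  with u show ?thesis
    by auto
qed

definition puncture :: "nat \<Rightarrow> bit list \<Rightarrow> bit list" where
  "puncture i c = take i c @ drop (Suc i) c"

lemma length_puncture [simp]: "i < length c \<Longrightarrow> length (puncture i c) = length c - 1"
  by (simp add: puncture_def)

lemma nth_puncture:
  "i < length c \<Longrightarrow> j < length c - 1 \<Longrightarrow> puncture i c ! j = c ! (if j < i then j else Suc j)"
  by (auto simp: puncture_def nth_append)

lemma puncture_vzero: "i < n \<Longrightarrow> puncture i (vzero n) = vzero (n - 1)"
  by (rule nth_equalityI) (auto simp: nth_puncture)

lemma puncture_vadd:
  "i < n \<Longrightarrow> length x = n \<Longrightarrow> length y = n \<Longrightarrow> puncture i (vadd x y) = vadd (puncture i x) (puncture i y)"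
  by (rule nth_equalityI) (auto simp: nth_puncture)

lemma sum_list_puncture: "i < length c \<Longrightarrow> sum_list c = sum_list (puncture i c) + c ! i"
  by (subst id_take_nth_drop) (auto simp: puncture_def add_ac)

lemma hwt_puncture: "i < length c \<Longrightarrow> c ! i = 0 \<Longrightarrow> hwt (puncture i c) = hwt c"
  by (subst (2) id_take_nth_drop) (auto simp: puncture_def hwt_def)

lemma eip_puncture:
  assumes "i < n" "length x = n" "length y = n"
  shows "eip x y = eip (puncture i x) (puncture i y) + x ! i * y ! i"
proof -
  have "map2 (*) (puncture i x) (puncture i y) = puncture i (map2 (*) x y)"
    using assms by (intro nth_equalityI) (auto simp: nth_puncture)
  then show ?thesis
    using assms sum_list_puncture[of i "map2 (*) x y"] by (simp add: eip_def)
qed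

lemma puncture_eqD:
  assumes "i < length x" "length x = length y" "x ! i = y ! i" "puncture i x = puncture i y"
  shows "x = y"
proof -
  have "take i x = take i y \<and> drop (Suc i) x = drop (Suc i) y"
    using assms by (simp add: puncture_def)
  then show ?thesis
    using assms id_take_nth_drop[of i x] id_take_nth_drop[of i y] by metis
qed

definition move_to_front :: "nat \<Rightarrow> nat \<Rightarrow> nat" where
  "move_to_front i j = (if j = i then 0 else if j < i then Suc j else j)"

lemma move_to_front_permutes: "i < n \<Longrightarrow> move_to_front i permutes {..<n}"
proof (rule bij_imp_permutes)
  assume i: "i < n"
  have inj: "inj_on (move_to_front i) {..<n}"
    by (auto simp: inj_on_def move_to_front_def split: if_splits)
  moreover have "move_to_front i ` {..<n} \<subseteq> {..<n}"
    using i by (auto simp: move_to_front_def)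
  ultimately show "bij_betw (move_to_front i) {..<n} {..<n}"
    by (simp add: bij_betw_def endo_inj_surj)
  show "x \<notin> {..<n} \<Longrightarrow> move_to_front i x = x" for x
    using i by (auto simp: move_to_front_def)
qed

lemma perm_vec_move_to_front:
  assumes "i < n" "length c = n"
  shows "perm_vec n (move_to_front i) (c ! i # puncture i c) = c"
proof (rule nth_equalityI)
  fix j assume "j < length (perm_vec n (move_to_front i) (c ! i # puncture i c))"
  then have j: "j < n"
    by (simp add: perm_vec_def)
  consider "j = i" | "j < i" | "i < j" by linarith
  then show "perm_vec n (move_to_front i) (c ! i # puncture i c) ! j = c ! j"
  proof cases
    case 3
    then obtain j' where "j = Suc j'"
      using not0_implies_Suc by fastforce
    with 3 j assms show ?thesis
      by (simp add: perm_vec_def move_to_front_def nth_puncture)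
  qed (use j assms in \<open>simp_all add: perm_vec_def move_to_front_def nth_puncture\<close>)
qed (simp add: perm_vec_def assms)

lemma code_equiv_move_to_front:
  "i < n \<Longrightarrow> \<forall>c\<in>C. length c = n \<Longrightarrow> code_equiv n C ((\<lambda>c. c ! i # puncture i c) ` C)"
  unfolding code_equiv_def
  by (rule exI[of _ "move_to_front i"]) (simp add: move_to_front_permutes image_image perm_vec_move_to_front)

lemma lincomb_map_Cons_zero: "lincomb (Suc m) (map (\<lambda>g. 0 # g) G) a = 0 # lincomb m G a"
proof (rule nth_equalityI)
  fix j assume "j < length (lincomb (Suc m) (map (\<lambda>g. 0 # g) G) a)"
  then show "lincomb (Suc m) (map (\<lambda>g. 0 # g) G) a ! j = (0 # lincomb m G a) ! j"
    by (cases j) (auto intro!: sum.neutral sum.cong)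
qed simp

lemma gen_code_bordered:
  assumes "length x = m"
  shows "gen_code (Suc m) ((1 # x) # map (\<lambda>g. 0 # g) G) =
    (\<lambda>g. 0 # g) ` gen_code m G \<union> (\<lambda>g. 1 # vadd x g) ` gen_code m G"
proof -
  have "gen_code (Suc m) (map (\<lambda>g. 0 # g) G) = (\<lambda>g. 0 # g) ` gen_code m G"
    by (auto simp: gen_code_def lincomb_map_Cons_zero)
  moreover have "vadd (1 # x) (0 # g) = 1 # vadd x g" for g
    by (simp add: vadd_def)
  ultimately show ?thesis
    using assms by (simp add: gen_code_Cons image_image)
qed

definition shortened :: "nat \<Rightarrow> bit list set \<Rightarrow> bit list set" where
  "shortened i C = puncture i ` {c \<in> C. c ! i = 0}"

lemma lin_code_shortened:
  assumes C: "lin_code n C" and i: "i < n"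
  shows "lin_code (n - 1) (shortened i C)"
  unfolding lin_code_def
proof (intro conjI ballI)
  show "shortened i C \<subseteq> {v. length v = n - 1}"
    using i lin_code_length[OF C] by (auto simp: shortened_def)
  have "vzero (n - 1) = puncture i (vzero n)"
    using i by (simp add: puncture_vzero)
  then show "vzero (n - 1) \<in> shortened i C"
    using i lin_code_vzero[OF C] by (auto simp: shortened_def)
  fix x y assume "x \<in> shortened i C" "y \<in> shortened i C"
  then obtain x' y' where "x' \<in> C" "y' \<in> C" "x' ! i = 0" "y' ! i = 0"
    and "x = puncture i x'" "y = puncture i y'"
    by (auto simp: shortened_def)
  with C i show "vadd x y \<in> shortened i C"
    unfolding shortened_def
    by (intro image_eqI[of _ _ "vadd x' y'"]) (auto simp: puncture_vadd lin_code_length lin_code_vadd)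
qed

lemma card_shortened:
  assumes "lin_code n C" "i < n"
  shows "card (shortened i C) = card {c \<in> C. c ! i = 0}"
  unfolding shortened_def
  using assms lin_code_length puncture_eqD by (intro card_image inj_onI) (metis (mono_tags) mem_Collect_eq)

lemma min_dist_shortened:
  assumes C: "lin_code n C" and i: "i < n" and nontrivial: "shortened i C - {vzero (n - 1)} \<noteq> {}"
  shows "min_dist n C \<le> min_dist (n - 1) (shortened i C)"
proof -
  have "hwt ` (shortened i C - {vzero (n - 1)}) \<subseteq> hwt ` (C - {vzero n})"
  proof
    fix w assume "w \<in> hwt ` (shortened i C - {vzero (n - 1)})"
    then obtain c where "c \<in> C" "c ! i = 0" "puncture i c \<noteq> vzero (n - 1)" "w = hwt (puncture i c)"
      by (auto simp: shortened_def)
    with C i show "w \<in> hwt ` (C - {vzero n})"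
      by (auto simp: hwt_puncture lin_code_length puncture_vzero)
  qed
  then show ?thesis
    unfolding min_dist_def using nontrivial lin_code_finite[OF C] by (intro Min_antimono) auto
qed

locale coordinate_pivot =
  fixes n :: nat and C :: "bit list set" and i :: nat and v :: "bit list"
  assumes lin: "lin_code n C" and coord: "i < n" and pivot_mem: "v \<in> C"
    and pivot_coord: "v ! i = 1" and pivot_eip: "\<forall>c\<in>C. eip c v = c ! i"
begin

lemma length_mem: "c \<in> C \<Longrightarrow> length c = n"
  using lin lin_code_length by blast

lemma vadd_pivot_coord: "c \<in> C \<Longrightarrow> vadd v c ! i = 1 + c ! i"
  using coord pivot_coord length_mem pivot_mem by simp

lemma pivot_decomposition: "C = {c \<in> C. c ! i = 0} \<union> vadd v ` {c \<in> C. c ! i = 0}"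
proof
  show "C \<subseteq> {c \<in> C. c ! i = 0} \<union> vadd v ` {c \<in> C. c ! i = 0}"
  proof
    fix c assume c: "c \<in> C"
    show "c \<in> {c \<in> C. c ! i = 0} \<union> vadd v ` {c \<in> C. c ! i = 0}"
    proof (cases "c ! i")
      case one
      then have "vadd v c \<in> {c \<in> C. c ! i = 0}"
        using c vadd_pivot_coord lin lin_code_vadd pivot_mem by auto
      moreover have "c = vadd v (vadd v c)"
        using c length_mem pivot_mem by (simp add: vadd_cancel_left)
      ultimately show ?thesis
        by blast
    qed (use c in auto)
  qed
  show "{c \<in> C. c ! i = 0} \<union> vadd v ` {c \<in> C. c ! i = 0} \<subseteq> C"
    using lin lin_code_vadd pivot_mem by auto
qed

lemma card_eq_twice_shortened: "card C = 2 * card (shortened i C)"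
proof -
  let ?D = "{c \<in> C. c ! i = 0}"
  have "finite ?D"
    using lin lin_code_finite by auto
  moreover have "?D \<inter> vadd v ` ?D = {}"
    using vadd_pivot_coord by auto
  moreover have "inj_on (vadd v) ?D"
    by (rule inj_onI) (metis length_mem mem_Collect_eq pivot_mem vadd_cancel_left)
  ultimately have "card C = card ?D + card ?D"
    by (subst pivot_decomposition) (simp add: card_Un_disjoint card_image)
  then show ?thesis
    using card_shortened[OF lin coord] by simp
qed

lemma eip_puncture_vanishing:
  "c \<in> C \<Longrightarrow> y \<in> C \<Longrightarrow> y ! i = 0 \<Longrightarrow> eip c y = eip (puncture i c) (puncture i y)"
  using eip_puncture[OF coord] length_mem by simp

lemma LCD_shortened:
  assumes LCD: "is_LCD n C"
  shows "is_LCD (n - 1) (shortened i C)"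
  unfolding is_LCD_def
proof
  show "shortened i C \<inter> euclid_dual (n - 1) (shortened i C) \<subseteq> {vzero (n - 1)}"
  proof
    fix y assume y: "y \<in> shortened i C \<inter> euclid_dual (n - 1) (shortened i C)"
    then obtain c where c: "c \<in> C" "c ! i = 0" "y = puncture i c"
      by (auto simp: shortened_def)
    have orth_vanishing: "eip d c = 0" if "d \<in> C" "d ! i = 0" for d
      using y c that eip_puncture_vanishing[of d c]
      by (auto simp: euclid_dual_def shortened_def)
    have "eip (vadd v d) c = 0" if "d \<in> C" "d ! i = 0" for d
      using that c orth_vanishing pivot_eip pivot_mem length_mem
      by (simp add: eip_commute[of _ c] eip_vadd_right)
    then have "\<forall>d\<in>C. eip d c = 0"
      using orth_vanishing by (subst pivot_decomposition) auto
    then have "c = vzero n"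
      using LCD c length_mem by (simp add: LCD_orthogonal_imp_vzero)
    then show "y \<in> {vzero (n - 1)}"
      using c coord by (simp add: puncture_vzero)
  qed
  show "{vzero (n - 1)} \<subseteq> shortened i C \<inter> euclid_dual (n - 1) (shortened i C)"
    using lin_code_shortened[OF lin coord]
    by (auto simp: lin_code_vzero euclid_dual_def lin_code_length eip_commute eip_vzero_right)
qed

lemma puncture_pivot_dual: "puncture i v \<in> euclid_dual (n - 1) (shortened i C)"
proof -
  have "eip (puncture i c) (puncture i v) = 0" if "c \<in> C" "c ! i = 0" for c
  proof -
    have "eip (puncture i c) (puncture i v) = eip (puncture i v) (puncture i c)"
      using that coord pivot_mem length_mem by (simp add: eip_commute)
    also have "\<dots> = eip v c"
      using that pivot_mem by (simp add: eip_puncture_vanishing)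
    also have "\<dots> = c ! i"
      using that pivot_eip pivot_mem length_mem by (simp add: eip_commute)
    finally show ?thesis
      using that by simp
  qed
  then show ?thesis
    using coord pivot_mem length_mem by (auto simp: euclid_dual_def shortened_def)
qed

lemma even_hwt_puncture_pivot: "even (hwt (puncture i v))"
proof -
  have "sum_list v = 1"
    using pivot_eip pivot_mem pivot_coord by (simp flip: eip_self)
  then show ?thesis
    using sum_list_puncture[of i v] coord pivot_coord length_mem pivot_mem
    by (simp add: even_hwt_iff bit_add_eq_0_iff)
qed

lemma move_to_front_image:
  "(\<lambda>c. c ! i # puncture i c) ` C =
    (\<lambda>g. 0 # g) ` shortened i C \<union> (\<lambda>g. 1 # vadd (puncture i v) g) ` shortened i C"
proof -
  let ?D = "{c \<in> C. c ! i = 0}"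
  have "(\<lambda>c. c ! i # puncture i c) ` vadd v ` ?D = (\<lambda>g. 1 # vadd (puncture i v) g) ` puncture i ` ?D"
    unfolding image_image
    using vadd_pivot_coord coord length_mem pivot_mem by (intro image_cong) (auto simp: puncture_vadd)
  moreover have "(\<lambda>c. c ! i # puncture i c) ` ?D = (\<lambda>g. 0 # g) ` puncture i ` ?D"
    by (auto simp: image_image)
  ultimately show ?thesis
    unfolding shortened_def by (subst pivot_decomposition) (simp only: image_Un)
qed

lemma bin_code_shortened:
  assumes "bin_code n k d C"
  shows "\<exists>d' \<ge> d. bin_code (n - 1) (k - 1) d' (shortened i C)"
proof -
  have lin_S: "lin_code (n - 1) (shortened i C)"
    by (rule lin_code_shortened[OF lin coord])
  have "2 ^ k = 2 * card (shortened i C)"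
    using assms card_eq_twice_shortened by (simp add: bin_code_def)
  then have k: "k > 0" and card_S: "card (shortened i C) = 2 ^ (k - 1)"
    by (cases k; simp)+
  show ?thesis
  proof (cases "k > 1")
    case True
    then have "card {vzero (n - 1)} < card (shortened i C)"
      using card_S one_less_power[of "2::nat" "k - 1"] by simp
    then have "shortened i C - {vzero (n - 1)} \<noteq> {}"
      using card_mono[of "{vzero (n - 1)}" "shortened i C"] by auto
    then have "d \<le> min_dist (n - 1) (shortened i C)"
      using assms k min_dist_shortened[OF lin coord] by (simp add: bin_code_def)
    then show ?thesis
      using lin_S card_S by (auto simp: bin_code_def)
  next
    case False
    then show ?thesis
      using lin_S card_S by (auto simp: bin_code_def)
  qed
qed

lemma code_equiv_bordered:
  assumes "is_gen_matrix (n - 1) G (shortened i C)"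
  shows "code_equiv n C (gen_code n ((1 # puncture i v) # map (\<lambda>g. 0 # g) G))"
proof -
  have "Suc (n - 1) = n" and "length (puncture i v) = n - 1"
    using coord length_mem pivot_mem by auto
  moreover have "gen_code (n - 1) G = shortened i C"
    using assms by (simp add: is_gen_matrix_def)
  ultimately have "gen_code n ((1 # puncture i v) # map (\<lambda>g. 0 # g) G) = (\<lambda>c. c ! i # puncture i c) ` C"
    using gen_code_bordered[of "puncture i v" "n - 1" G] move_to_front_image by simp
  then show ?thesis
    using code_equiv_move_to_front coord length_mem by simp
qed

end

theorem theorem3p6:
  fixes n k d :: nat and C' :: "bit list set"
  assumes "bin_code n k d C'" and "is_LCD n C'" and "odd_like_code C'"
  shows "\<exists>C d' G x. bin_code (n - 1) (k - 1) d' C \<and> d' \<ge> d \<and> is_LCD (n - 1) C \<and>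
           is_gen_matrix (n - 1) G C \<and> x \<in> euclid_dual (n - 1) C \<and> even (hwt x) \<and>
           code_equiv n C' (gen_code n ((1 # x) # map (\<lambda>g. 0 # g) G))"
proof -
  have C': "lin_code n C'"
    using assms(1) by (simp add: bin_code_def)
  obtain i v where "coordinate_pivot n C' i v"
    using odd_like_LCD_pivot_exists[OF C' assms(2,3)] coordinate_pivot.intro[OF C'] by blast
  then interpret coordinate_pivot n C' i v .
  obtain G where G: "is_gen_matrix (n - 1) G (shortened i C')"
    using lin_code_gen_matrix_exists[OF lin_code_shortened[OF C' coord]] by blast
  obtain d' where "d' \<ge> d" "bin_code (n - 1) (k - 1) d' (shortened i C')"
    using bin_code_shortened[OF assms(1)] by blast
  then show ?thesis
    using G code_equiv_bordered[OF G] LCD_shortened[OF assms(2)] puncture_pivot_dual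
      even_hwt_puncture_pivot
    by blast
qed

end
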